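(* Let $p,q\ge0$, $m=p+q$, and let $\boldsymbol x=(x_1,\dots,x_m)$, $\boldsymbol a=(a_1,\dots,a_m)$ be indeterminates. Then $$G^{p,q}(\boldsymbol x;\boldsymbol a)=(-1)^{\binom p2+\binom q2}\prod_{i=1}^m x_i^{p-1}(1-x_i^2)\cdot\det V^{p,q}(\boldsymbol x+\boldsymbol x^{-1};\boldsymbol a\boldsymbol x^{q-p})=(-1)^{\binom p2+\binom q2}\prod_{i=1}^m(1-x_i^2)\cdot\det U,$$ $$H^{p,q}(\boldsymbol x;\boldsymbol a)=(-1)^{\binom p2+\binom q2}\prod_{i=1}^m x_i^{p-1}(1-x_i)\cdot\det V^{p,q}(\boldsymbol x+\boldsymbol x^{-1};\boldsymbol a\boldsymbol x^{q-p})=(-1)^{\binom p2+\binom q2}\prod_{i=1}^m(1-x_i)\cdot\det U.$$ In particular $G^{p,q}(\boldsymbol x;\boldsymbol a)=\prod_{i=1}^m(1-x_i^2)\,F^{p,q}(\boldsymbol x;\boldsymbol a)$ and $H^{p,q}(\boldsymbol x;\boldsymbol a)=\prod_{i=1}^m(1-x_i)\,F^{p,q}(\boldsymbol x;\boldsymbol a)$. Here $\boldsymbol x+\boldsymbol x^{-1}=(x_1+x_1^{-1},\dots,x_m+x_m^{-1})$, $\boldsymbol a\boldsymbol x^{q-p}=(a_1x_1^{q-p},\dots,a_mx_m^{q-p})$, and $U$ is the $m\times m$ matrix whose $i$-th row is $$\big(x_i^{p-1},\,x_i^{p-2}(1+x_i^2),\,\dots,\,(1+x_i^2)^{p-1},\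 a_ix_i^{q-1},\,a_ix_i^{q-2}(1+x_i^2),\,\dots,\,a_i(1+x_i^2)^{q-1}\big).$$
   Context: Partitions: a partition $\lambda=(\lambda_1\ge\lambda_2\ge\cdots)$ of nonnegative integers with finitely many nonzero parts; $l(\lambda)$ is the number of nonzero parts, $|\lambda|=\sum_i\lambda_i$. In Frobenius notation $\lambda=(\alpha_1,\dots,\alpha_d\,|\,\beta_1,\dots,\beta_d)$ where $d=p(\lambda)=\#\{i:\lambda_i\ge i\}$, $\alpha_i=\lambda_i-i$, $\beta_i=\lambda'_i-i$ ($\lambda'$ the conjugate partition). For an integer $m\ge 0$: $\mathcal{P}_m$ is the set of partitions with $l(\lambda)\le m$ of the form $(\alpha_1,\dots,\alpha_d\,|\,\alpha_1+1,\dots,\alpha_d+1)$; $\mathcal Q_m$ those of the form $(\alpha_1+1,\dots,\alpha_d+1\,|\,\alpha_1,\dots,\alpha_d)$; $\mathcal R_m$ those of the form $(\alpha_1,\dots,\alpha_d\,|\,\alpha_1,\dots,\alpha_d)$ (the empty partition included in each). For nonnegative integers $p,q$, vectors $\boldsymbol{x}=(x_1,\dots,x_{p+q})$, $\boldsymbol{a}=(a_1,\dots,a_{p+q})$, and partitions $\lambda,\mu$ with $l(\lambda)\le p$, $l(\mu)\le q$, let $V^{p,q}_{\lambda,\mu}(\boldsymbol{x};\boldsymbol{a})$ be the $(p+q)\times(p+q)$ matrix whose $i$-th row is $$(x_i^{\lambda_p},x_i^{\lambda_{p-1}+1},\dots,x_i^{\lambda_1+p-1},\ a_ix_i^{\mu_q},a_ix_i^{\mu_{q-1}+1},\dots,a_ix_i^{\mu_1+q-1}),$$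 and $V^{p,q}(\boldsymbol x;\boldsymbol a)=V^{p,q}_{\emptyset,\emptyset}(\boldsymbol x;\boldsymbol a)$ (rows $(1,x_i,\dots,x_i^{p-1},a_i,a_ix_i,\dots,a_ix_i^{q-1})$). Define $$F^{p,q}(\boldsymbol{x};\boldsymbol{a})=\sum_{\lambda\in\mathcal{P}_p,\ \mu\in\mathcal{P}_q}(-1)^{(|\lambda|+|\mu|)/2}\det V^{p,q}_{\lambda,\mu}(\boldsymbol{x};\boldsymbol{a}),\qquad G^{p,q}(\boldsymbol{x};\boldsymbol{a})=\sum_{\lambda\in\mathcal{Q}_p,\ \mu\in\mathcal{Q}_q}(-1)^{(|\lambda|+|\mu|)/2}\det V^{p,q}_{\lambda,\mu}(\boldsymbol{x};\boldsymbol{a}),$$ $$H^{p,q}(\boldsymbol{x};\boldsymbol{a})=\sum_{\lambda\in\mathcal{R}_p,\ \mu\in\mathcal{R}_q}(-1)^{(|\lambda|+p(\lambda)+|\mu|+p(\mu))/2}\det V^{p,q}_{\lambda,\mu}(\boldsymbol{x};\boldsymbol{a}).$$ *)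

theory Defs
  imports Main "Jordan_Normal_Form.Determinant"
begin

text \<open>A partition with at most p nonzero parts is encoded as a nonincreasing list of
  length p (trailing zeros allowed).  Parts are indexed from 1.\<close>

definition parts :: "nat \<Rightarrow> nat list set" where
  "parts p = {lam. length lam = p \<and> sorted_wrt (\<ge>) lam}"

definition pt :: "nat list \<Rightarrow> nat \<Rightarrow> nat" where
  "pt lam i = (if 1 \<le> i \<and> i \<le> length lam then lam ! (i - 1) else 0)"

definition conj_pt :: "nat list \<Rightarrow> nat \<Rightarrow> nat" where
  "conj_pt lam j = card {i \<in> {1..length lam}. pt lam i \<ge> j}"

definition frob_rank :: "nat list \<Rightarrow> nat" where
  "frob_rank lam = card {i \<in> {1..length lam}. pt lam i \<ge> i}"

definition frob_alpha :: "nat list \<Rightarrow> nat \<Rightarrow> int" where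
  "frob_alpha lam i = int (pt lam i) - int i"

definition frob_beta :: "nat list \<Rightarrow> nat \<Rightarrow> int" where
  "frob_beta lam i = int (conj_pt lam i) - int i"

definition psize :: "nat list \<Rightarrow> nat" where
  "psize lam = sum_list lam"

definition PP :: "nat \<Rightarrow> nat list set" where
  "PP p = {lam \<in> parts p. \<forall>i\<in>{1..frob_rank lam}. frob_beta lam i = frob_alpha lam i + 1}"

definition QQ :: "nat \<Rightarrow> nat list set" where
  "QQ p = {lam \<in> parts p. \<forall>i\<in>{1..frob_rank lam}. frob_alpha lam i = frob_beta lam i + 1}"

definition RR :: "nat \<Rightarrow> nat list set" where
  "RR p = {lam \<in> parts p. \<forall>i\<in>{1..frob_rank lam}. frob_alpha lam i = frob_beta lam i}"

text \<open>The matrix V^{p,q}_{lam,mu}(x;a); rows/columns indexed from 0.\<close>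
definition Vmat :: "nat \<Rightarrow> nat \<Rightarrow> nat list \<Rightarrow> nat list \<Rightarrow> (nat \<Rightarrow> 'a::comm_ring_1) \<Rightarrow> (nat \<Rightarrow> 'a)
    \<Rightarrow> 'a mat" where
  "Vmat p q lam mu x a = mat (p + q) (p + q) (\<lambda>(i, j).
     if j < p then x i ^ (pt lam (p - j) + j)
     else a i * x i ^ (pt mu (q - (j - p)) + (j - p)))"

definition Fpq :: "nat \<Rightarrow> nat \<Rightarrow> (nat \<Rightarrow> 'a::comm_ring_1) \<Rightarrow> (nat \<Rightarrow> 'a) \<Rightarrow> 'a" where
  "Fpq p q x a = (\<Sum>(lam, mu) \<in> PP p \<times> PP q.
     (-1) ^ ((psize lam + psize mu) div 2) * det (Vmat p q lam mu x a))"

definition Gpq :: "nat \<Rightarrow> nat \<Rightarrow> (nat \<Rightarrow> 'a::comm_ring_1) \<Rightarrow> (nat \<Rightarrow> 'a) \<Rightarrow> 'a" where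
  "Gpq p q x a = (\<Sum>(lam, mu) \<in> QQ p \<times> QQ q.
     (-1) ^ ((psize lam + psize mu) div 2) * det (Vmat p q lam mu x a))"

definition Hpq :: "nat \<Rightarrow> nat \<Rightarrow> (nat \<Rightarrow> 'a::comm_ring_1) \<Rightarrow> (nat \<Rightarrow> 'a) \<Rightarrow> 'a" where
  "Hpq p q x a = (\<Sum>(lam, mu) \<in> RR p \<times> RR q.
     (-1) ^ ((psize lam + frob_rank lam + psize mu + frob_rank mu) div 2)
       * det (Vmat p q lam mu x a))"

definition Umat :: "nat \<Rightarrow> nat \<Rightarrow> (nat \<Rightarrow> 'a::comm_ring_1) \<Rightarrow> (nat \<Rightarrow> 'a) \<Rightarrow> 'a mat" where
  "Umat p q x a = mat (p + q) (p + q) (\<lambda>(i, j).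
     if j < p then x i ^ (p - 1 - j) * (1 + x i ^ 2) ^ j
     else a i * x i ^ (q - 1 - (j - p)) * (1 + x i ^ 2) ^ (j - p))"

end

theory Submission
  imports Defs
begin

(* Clearing the powers x_i^(p-1) turns V(x + 1/x; a x^(q-p)) into U, and in either matrix the
   columns of a block are (x + 1/x)^j times a common factor.  After multiplying row i by the edge
   factor 1, 1 - x_i or 1 - x_i^2 (d = 0, 1, 2, for F, H, G), the Laurent polynomials
   x^(m-1-k) + c x^(m-1+k+d) obey a Chebyshev-type three-term recurrence under multiplication
   by x + 1/x, so unitriangular column operations turn a block of width m into the columns
   x^k + c x^(2m-2+d-k), k < m, in reversed order.  Expanding these by multilinearity, each column contributes either x^k (a zero
   part) or its mirror image, which after reordering adds a hook whose arm exceeds its leg by d - 1.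
   This produces exactly the partitions (alpha | alpha + 1 - d), i.e. P, R and Q, with the signs
   of F, H and G.  Comparing d = 0 with d = 2 and d = 1 gives G = prod (1 - x_i^2) F and
   H = prod (1 - x_i) F. *)

section \<open>Determinants of matrices given by their columns\<close>

definition det_cols :: "nat \<Rightarrow> (nat \<Rightarrow> 'a::comm_ring_1) list \<Rightarrow> 'a" where
  "det_cols n cs = det (mat n n (\<lambda>(i, j). (cs ! j) i))"

lemma det_cols_cong:
  assumes "\<And>j i. j < n \<Longrightarrow> i < n \<Longrightarrow> (cs ! j) i = (cs' ! j) i"
  shows "det_cols n cs = det_cols n cs'"
  unfolding det_cols_def using assms by (intro arg_cong[of _ _ det] eq_matI) auto

lemma det_cols_col_expansion:
  "det_cols n cs = (\<Sum>\<pi> | \<pi> permutes {0..<n}. signof \<pi> * (\<Prod>j<n. (cs ! j) (\<pi> j)))"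
proof -
  have "(\<Prod>j<n. mat n n (\<lambda>(i, j). (cs ! j) i) $$ (\<pi> j, j)) = (\<Prod>j<n. (cs ! j) (\<pi> j))"
    if "\<pi> permutes {0..<n}" for \<pi>
    using permutes_in_image[OF that] by (intro prod.cong) auto
  then show ?thesis
    unfolding det_cols_def by (simp add: det_col[of _ n])
qed

lemma det_cols_linear:
  assumes "length pre < n"
  shows "det_cols n (pre @ (\<lambda>i. u i + c * v i) # post)
    = det_cols n (pre @ u # post) + c * det_cols n (pre @ v # post)"
proof -
  let ?k = "length pre"
  have split: "(\<Prod>j<n. ((pre @ w # post) ! j) (\<pi> j))
      = w (\<pi> ?k) * (\<Prod>j\<in>{..<n} - {?k}. ((pre @ w # post) ! j) (\<pi> j))" for w \<pi>
    using assms prod.remove[of "{..<n}" ?k "\<lambda>j. ((pre @ w # post) ! j) (\<pi> j)"] by simp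
  have other: "(\<Prod>j\<in>{..<n} - {?k}. ((pre @ w # post) ! j) (\<pi> j))
      = (\<Prod>j\<in>{..<n} - {?k}. ((pre @ u # post) ! j) (\<pi> j))" for w \<pi>
    by (intro prod.cong) (auto simp: nth_append nth_Cons')
  show ?thesis
    unfolding det_cols_col_expansion split
    by (simp add: other[of "\<lambda>i. u i + c * v i"] other[of v] algebra_simps sum.distrib sum_distrib_left)
qed

lemma det_cols_zero_col:
  assumes "length pre < n"
  shows "det_cols n (pre @ (\<lambda>i. 0) # post) = 0"
  using det_cols_linear[OF assms, of "\<lambda>i. 0" 1 "\<lambda>i. 0" post] by simp

lemma det_cols_sum_col:
  assumes "finite S" and "length pre < n"
  shows "det_cols n (pre @ (\<lambda>i. \<Sum>s\<in>S. c s * f s i) # post)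
    = (\<Sum>s\<in>S. c s * det_cols n (pre @ f s # post))"
  using assms(1)
proof (induction S rule: finite_induct)
  case empty
  show ?case using det_cols_zero_col[OF assms(2)] by simp
next
  case (insert s S)
  then show ?case
    using det_cols_linear[OF assms(2), of "\<lambda>i. \<Sum>s\<in>S. c s * f s i" "c s" "f s"]
    by (simp add: add.commute)
qed

lemma det_cols_repeated_col:
  assumes "length pre < n" and "l < length pre"
  shows "det_cols n (pre @ pre ! l # post) = 0"
proof -
  let ?A = "mat n n (\<lambda>(i, j). ((pre @ pre ! l # post) ! j) i)"
  have "col ?A l = col ?A (length pre)"
    using assms by (auto intro!: eq_vecI simp: nth_append)
  then show ?thesis
    unfolding det_cols_def using assms by (intro det_identical_columns[of ?A n l "length pre"]) auto
qed

lemma det_cols_swap: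
  assumes "Suc (length pre) < n"
  shows "det_cols n (pre @ u # v # post) = - det_cols n (pre @ v # u # post)"
proof -
  let ?k = "length pre" and ?A = "mat n n (\<lambda>(i, j). ((pre @ v # u # post) ! j) i)"
  have "swapcols ?k (Suc ?k) ?A = mat n n (\<lambda>(i, j). ((pre @ u # v # post) ! j) i)"
    using assms by (auto intro!: eq_matI simp: mat_swapcols_def nth_append)
  then show ?thesis
    unfolding det_cols_def using det_swapcols[of ?k n "Suc ?k" ?A] assms by simp
qed

lemma det_cols_move:
  assumes "length pre + length mid < n"
  shows "det_cols n (pre @ v # mid @ post) = (-1) ^ length mid * det_cols n (pre @ mid @ v # post)"
  using assms
proof (induction mid arbitrary: pre)
  case Nil
  then show ?case by simp
next
  case (Cons w mid)
  have "det_cols n (pre @ v # w # mid @ post) = - det_cols n ((pre @ [w]) @ v # mid @ post)"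
    using det_cols_swap[of pre n v w] Cons.prems by simp
  also have "\<dots> = - ((-1) ^ length mid * det_cols n ((pre @ [w]) @ mid @ v # post))"
    using Cons.IH[of "pre @ [w]"] Cons.prems by simp
  finally show ?case by simp
qed

lemma det_cols_rev:
  assumes "length pre + length C \<le> n"
  shows "det_cols n (pre @ rev C @ post) = (-1) ^ (length C choose 2) * det_cols n (pre @ C @ post)"
  using assms
proof (induction C arbitrary: post)
  case Nil
  then show ?case by (simp add: choose_two)
next
  case (Cons v C)
  have "det_cols n (pre @ rev (v # C) @ post) = (-1) ^ (length C choose 2) * det_cols n (pre @ C @ v # post)"
    using Cons by simp
  also have "det_cols n (pre @ C @ v # post) = (-1) ^ length C * det_cols n (pre @ v # C @ post)"
    using det_cols_move[of pre C n v post] Cons.prems by (simp add: power_mult_distrib[symmetric])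
  finally show ?case
    by (simp add: numeral_2_eq_2 power_add mult_ac)
qed

lemma det_cols_row_expansion:
  "det_cols n cs = (\<Sum>\<pi> | \<pi> permutes {0..<n}. signof \<pi> * (\<Prod>i<n. (cs ! \<pi> i) i))"
  unfolding det_cols_def det_def'[OF mat_carrier] atLeast0LessThan
proof (rule sum.cong[OF refl])
  fix \<pi> assume "\<pi> \<in> {\<pi>. \<pi> permutes {..<n}}"
  then have "\<pi> i < n" if "i < n" for i
    using permutes_in_image that by fastforce
  then show "signof \<pi> * (\<Prod>i<n. mat n n (\<lambda>(i, j). (cs ! j) i) $$ (i, \<pi> i))
      = signof \<pi> * (\<Prod>i<n. (cs ! \<pi> i) i)"
    by (auto intro!: prod.cong)
qed

lemma det_cols_scale_rows:
  assumes "n \<le> length cs"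
  shows "det_cols n (map (\<lambda>v i. c i * v i) cs) = (\<Prod>i<n. c i) * det_cols n cs"
proof -
  have "signof \<pi> * (\<Prod>i<n. (map (\<lambda>v i. c i * v i) cs ! \<pi> i) i)
      = (\<Prod>i<n. c i) * (signof \<pi> * (\<Prod>i<n. (cs ! \<pi> i) i))"
    if "\<pi> permutes {0..<n}" for \<pi>
  proof -
    have "\<pi> i < length cs" if "i < n" for i
      using permutes_in_image[OF \<open>\<pi> permutes {0..<n}\<close>, of i] that assms by simp
    then have "(\<Prod>i<n. (map (\<lambda>v i. c i * v i) cs ! \<pi> i) i) = (\<Prod>i<n. c i * (cs ! \<pi> i) i)"
      by (auto intro!: prod.cong)
    then show ?thesis by (simp only: prod.distrib mult.left_commute)
  qed
  then show ?thesis
    unfolding det_cols_row_expansion sum_distrib_left by (intro sum.cong) simp_all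
qed

definition in_span_upto :: "nat \<Rightarrow> (nat \<Rightarrow> nat \<Rightarrow> 'a::comm_ring_1) \<Rightarrow> nat \<Rightarrow> (nat \<Rightarrow> 'a) \<Rightarrow> bool" where
  "in_span_upto n B j v \<longleftrightarrow> (\<exists>t. \<forall>i<n. v i = (\<Sum>l<j. t l * B l i))"

lemma in_span_upto_cong:
  "in_span_upto n B j v \<Longrightarrow> (\<And>i. i < n \<Longrightarrow> v i = w i) \<Longrightarrow> in_span_upto n B j w"
  unfolding in_span_upto_def by auto

lemma in_span_upto_zero: "in_span_upto n B j (\<lambda>i. 0)"
  unfolding in_span_upto_def by (intro exI[of _ "\<lambda>l. 0"]) simp

lemma in_span_upto_add:
  assumes "in_span_upto n B j u" and "in_span_upto n B j v"
  shows "in_span_upto n B j (\<lambda>i. u i + v i)"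
proof -
  obtain s t where "\<forall>i<n. u i = (\<Sum>l<j. s l * B l i)" and "\<forall>i<n. v i = (\<Sum>l<j. t l * B l i)"
    using assms unfolding in_span_upto_def by blast
  then show ?thesis
    unfolding in_span_upto_def
    by (intro exI[of _ "\<lambda>l. s l + t l"]) (simp add: sum.distrib distrib_right)
qed

lemma in_span_upto_cmult:
  assumes "in_span_upto n B j v"
  shows "in_span_upto n B j (\<lambda>i. c * v i)"
proof -
  obtain t where "\<forall>i<n. v i = (\<Sum>l<j. t l * B l i)"
    using assms unfolding in_span_upto_def by blast
  then show ?thesis
    unfolding in_span_upto_def
    by (intro exI[of _ "\<lambda>l. c * t l"]) (simp add: sum_distrib_left mult.assoc)
qed

lemma in_span_upto_sum:
  "finite S \<Longrightarrow> (\<And>s. s \<in> S \<Longrightarrow> in_span_upto n B j (f s))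
    \<Longrightarrow> in_span_upto n B j (\<lambda>i. \<Sum>s\<in>S. f s i)"
  by (induction S rule: finite_induct) (auto intro: in_span_upto_zero in_span_upto_add)

lemma in_span_upto_mono:
  assumes "in_span_upto n B j v" and "j \<le> j'"
  shows "in_span_upto n B j' v"
proof -
  obtain t where "\<forall>i<n. v i = (\<Sum>l<j. t l * B l i)"
    using assms unfolding in_span_upto_def by blast
  moreover have "(\<Sum>l<j'. (if l < j then t l else 0) * B l i) = (\<Sum>l<j. t l * B l i)" for i
    using \<open>j \<le> j'\<close> by (subst sum.mono_neutral_right[of "{..<j'}" "{..<j}"]) auto
  ultimately show ?thesis
    unfolding in_span_upto_def by (intro exI[of _ "\<lambda>l. if l < j then t l else 0"]) simp
qed

lemma in_span_upto_basis: "l < j \<Longrightarrow> in_span_upto n B j (B l)"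
  unfolding in_span_upto_def
  by (intro exI[of _ "\<lambda>l'. if l' = l then 1 else 0"]) (simp add: if_distrib[of "\<lambda>c. c * _"] cong: if_cong)

lemma det_cols_unitriangular:
  assumes "length pre + m \<le> n"
    and "\<And>j. j < m \<Longrightarrow> in_span_upto n B j (\<lambda>i. A j i - B j i)"
  shows "det_cols n (pre @ map A [0..<m] @ post) = det_cols n (pre @ map B [0..<m] @ post)"
  using assms
proof (induction m arbitrary: post)
  case 0
  then show ?case by simp
next
  case (Suc m)
  let ?pre = "pre @ map B [0..<m]"
  have len: "length ?pre < n" using Suc.prems(1) by simp
  obtain t where t: "\<forall>i<n. A m i - B m i = (\<Sum>l<m. t l * B l i)"
    using Suc.prems(2)[of m] unfolding in_span_upto_def by auto
  have "det_cols n (pre @ map A [0..<Suc m] @ post) = det_cols n (?pre @ A m # post)"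
    using Suc by simp
  also have "\<dots> = det_cols n (?pre @ (\<lambda>i. B m i + 1 * (\<Sum>l<m. t l * B l i)) # post)"
    using t len by (intro det_cols_cong) (auto simp: nth_append nth_Cons' algebra_simps)
  also have "\<dots> = det_cols n (?pre @ B m # post) + (\<Sum>l<m. t l * det_cols n (?pre @ B l # post))"
    unfolding det_cols_linear[OF len] det_cols_sum_col[OF finite_lessThan len] by simp
  also have "(\<Sum>l<m. t l * det_cols n (?pre @ B l # post)) = 0"
    using det_cols_repeated_col[OF len, of "length pre + _"] by (simp add: nth_append)
  finally show ?case by simp
qed

lemma det_cols_power_cols:
  assumes step: "\<And>k. in_span_upto n B (Suc k) (\<lambda>i. y i * B k i - B (Suc k) i)"
    and base: "\<And>i. i < n \<Longrightarrow> b i = B 0 i"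
    and "length pre + m \<le> n"
  shows "det_cols n (pre @ map (\<lambda>j i. y i ^ j * b i) [0..<m] @ post)
    = det_cols n (pre @ map B [0..<m] @ post)"
proof (rule det_cols_unitriangular)
  have times_y: "in_span_upto n B (Suc j) (\<lambda>i. y i * v i)" if v: "in_span_upto n B j v" for j v
  proof -
    obtain t where t: "\<forall>i<n. v i = (\<Sum>l<j. t l * B l i)"
      using v unfolding in_span_upto_def by blast
    have "in_span_upto n B (Suc j) (\<lambda>i. B (Suc l) i + (y i * B l i - B (Suc l) i))" if "l < j" for l
      using that by (intro in_span_upto_add in_span_upto_basis in_span_upto_mono[OF step]) auto
    then have "in_span_upto n B (Suc j) (\<lambda>i. \<Sum>l<j. t l * (y i * B l i))"
      by (intro in_span_upto_sum in_span_upto_cmult) auto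
    then show ?thesis
      by (rule in_span_upto_cong) (simp add: t sum_distrib_left ac_simps)
  qed
  show "in_span_upto n B j (\<lambda>i. y i ^ j * b i - B j i)" for j
  proof (induction j)
    case 0
    show ?case by (rule in_span_upto_cong[OF in_span_upto_zero]) (simp add: base)
  next
    case (Suc j)
    have "in_span_upto n B (Suc j) (\<lambda>i. y i * (y i ^ j * b i - B j i) + (y i * B j i - B (Suc j) i))"
      by (intro in_span_upto_add times_y Suc step)
    then show ?case
      by (rule in_span_upto_cong) (simp add: algebra_simps)
  qed
qed (use assms in simp)

section \<open>Partitions with Frobenius coordinates (\<alpha> | \<alpha> + 1 - d)\<close>

lemma filter_atLeastAtMost_Suc:
  "\<not> P (Suc n) \<Longrightarrow> {i \<in> {1..Suc n}. P i} = {i \<in> {1..n}. P i}"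
  using le_Suc_eq by auto

lemma card_filter_atLeastAtMost_Suc:
  "card {i \<in> {1..Suc n}. P i} = (if P 1 then 1 else 0) + card {i \<in> {1..n}. P (Suc i)}"
proof -
  have "{1..Suc n} = insert 1 (Suc ` {1..n})"
    by (simp add: atLeastAtMostSuc_conv image_Suc_atLeastAtMost) (auto simp: numeral_2_eq_2)
  then have "{i \<in> {1..Suc n}. P i} = {i. i = 1 \<and> P 1} \<union> Suc ` {i \<in> {1..n}. P (Suc i)}"
    by (simp only:) blast
  moreover have "finite {i \<in> {1..n}. P (Suc i)}" by simp
  ultimately show ?thesis by (auto simp: card_image card_insert_if)
qed

lemma ball_atLeastAtMost_Suc: "(\<forall>i\<in>{1..Suc n}. P i) \<longleftrightarrow> P 1 \<and> (\<forall>i\<in>{1..n}. P (Suc i))"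
proof (intro iffI ballI)
  fix i assume H: "P 1 \<and> (\<forall>i\<in>{1..n}. P (Suc i))" and i: "i \<in> {1..Suc n}"
  show "P i"
  proof (cases "i = 1")
    case False
    then have "i - 1 \<in> {1..n}" and "i = Suc (i - 1)" using i by auto
    then show ?thesis using H by metis
  qed (use H in simp)
qed auto

lemma downward_closed_eq_atLeastAtMost:
  fixes S :: "nat set"
  assumes "finite S" and "0 \<notin> S"
    and closed: "\<And>i j. i \<in> S \<Longrightarrow> 1 \<le> j \<Longrightarrow> j \<le> i \<Longrightarrow> j \<in> S"
  shows "S = {1..card S}"
proof (intro equalityI subsetI)
  fix i assume "i \<in> S"
  then have "{1..i} \<subseteq> S" using closed by auto
  then have "i \<le> card S" using card_mono[OF assms(1), of "{1..i}"] by simp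
  then show "i \<in> {1..card S}" using \<open>i \<in> S\<close> assms(2) by (cases i) auto
next
  fix i assume i: "i \<in> {1..card S}"
  show "i \<in> S"
  proof (rule ccontr)
    assume "i \<notin> S"
    have "s \<in> {1..<i}" if "s \<in> S" for s
    proof -
      have "s \<noteq> 0" using assms(2) that by (intro notI) simp
      moreover have "\<not> i \<le> s" using closed[OF that, of i] \<open>i \<notin> S\<close> i by auto
      ultimately show ?thesis by simp
    qed
    then have "S \<subseteq> {1..<i}" by blast
    then have "card S \<le> i - 1" using card_mono[of "{1..<i}" S] by simp
    then show False using i by auto
  qed
qed

definition shifted_parts :: "nat \<Rightarrow> nat \<Rightarrow> nat list set" where
  "shifted_parts d p = {lam \<in> parts p.
     \<forall>i\<in>{1..frob_rank lam}. frob_alpha lam i = frob_beta lam i + int d - 1}"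

lemma PP_eq_shifted_parts: "PP p = shifted_parts 0 p"
  unfolding PP_def shifted_parts_def by auto

lemma RR_eq_shifted_parts: "RR p = shifted_parts 1 p"
  unfolding RR_def shifted_parts_def by auto

lemma QQ_eq_shifted_parts: "QQ p = shifted_parts 2 p"
  unfolding QQ_def shifted_parts_def by auto

lemma length_shifted_parts: "lam \<in> shifted_parts d p \<Longrightarrow> length lam = p"
  unfolding shifted_parts_def parts_def by simp

lemma pt_antimono:
  assumes "sorted_wrt (\<ge>) lam" and "1 \<le> j" and "j \<le> i"
  shows "pt lam i \<le> pt lam j"
proof (cases "i \<le> length lam")
  case True
  have "lam ! (i - 1) \<le> lam ! (j - 1)"
    using sorted_wrt_nth_less[OF assms(1), of "j - 1" "i - 1"] True assms(2,3) by (cases "j = i") auto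
  then show ?thesis using True assms(2,3) unfolding pt_def by simp
next
  case False
  then show ?thesis unfolding pt_def by simp
qed

lemma le_pt_first:
  assumes "sorted_wrt (\<ge>) lam" and "v \<in> set lam"
  shows "v \<le> pt lam 1"
proof -
  obtain k where "k < length lam" and "lam ! k = v"
    using assms(2) by (auto simp: in_set_conv_nth)
  then have "pt lam (Suc k) = v" unfolding pt_def by simp
  then show ?thesis using pt_antimono[OF assms(1), of 1 "Suc k"] by simp
qed

lemma frob_rank_interval:
  assumes "sorted_wrt (\<ge>) lam"
  shows "{i \<in> {1..length lam}. i \<le> pt lam i} = {1..frob_rank lam}"
  unfolding frob_rank_def
proof (rule downward_closed_eq_atLeastAtMost)
  fix i j assume "i \<in> {i \<in> {1..length lam}. i \<le> pt lam i}" and "1 \<le> j" and "j \<le> i"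
  then show "j \<in> {i \<in> {1..length lam}. i \<le> pt lam i}"
    using pt_antimono[OF assms, of j i] by simp
qed simp_all

lemma le_pt_if_le_frob_rank:
  assumes "sorted_wrt (\<ge>) lam" and "1 \<le> i" and "i \<le> frob_rank lam"
  shows "i \<le> pt lam i" and "i \<le> length lam"
proof -
  have "i \<in> {1..frob_rank lam}" using assms(2,3) by simp
  then have "i \<in> {i \<in> {1..length lam}. i \<le> pt lam i}"
    unfolding frob_rank_interval[OF assms(1)] .
  then show "i \<le> pt lam i" and "i \<le> length lam" by simp_all
qed

lemma conj_pt_le_length: "conj_pt lam j \<le> length lam"
proof -
  have "conj_pt lam j \<le> card {1..length lam}"
    unfolding conj_pt_def by (intro card_mono) auto
  then show ?thesis by simp
qed

lemma conj_pt_zero: "conj_pt lam 0 = length lam"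
proof -
  have "{i \<in> {1..length lam}. 0 \<le> pt lam i} = {1..length lam}" by auto
  then show ?thesis unfolding conj_pt_def by simp
qed

lemma pt_append_zero: "pt (lam @ [0]) i = pt lam i"
  unfolding pt_def by (auto simp: nth_append)

lemma conj_pt_append_zero: "1 \<le> j \<Longrightarrow> conj_pt (lam @ [0]) j = conj_pt lam j"
  unfolding conj_pt_def pt_append_zero length_append_singleton
  by (subst filter_atLeastAtMost_Suc) (auto simp: pt_def)

lemma frob_rank_append_zero: "frob_rank (lam @ [0]) = frob_rank lam"
  unfolding frob_rank_def pt_append_zero length_append_singleton
  by (subst filter_atLeastAtMost_Suc) (auto simp: pt_def)

lemma parts_append_zero_iff: "lam @ [0] \<in> parts (Suc p) \<longleftrightarrow> lam \<in> parts p"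
  unfolding parts_def by (auto simp: sorted_wrt_append)

lemma shifted_parts_append_zero_iff: "lam @ [0] \<in> shifted_parts d (Suc p) \<longleftrightarrow> lam \<in> shifted_parts d p"
  unfolding shifted_parts_def frob_alpha_def frob_beta_def
  by (simp add: parts_append_zero_iff frob_rank_append_zero pt_append_zero conj_pt_append_zero)

lemma pt_add_hook:
  "pt (h # map Suc lam) (Suc i) = (if i = 0 then h else if i \<le> length lam then Suc (pt lam i) else 0)"
  unfolding pt_def by (simp add: nth_Cons')

lemma conj_pt_add_hook:
  "conj_pt (h # map Suc lam) (Suc j) = (if Suc j \<le> h then 1 else 0) + conj_pt lam j"
proof -
  have "{i \<in> {1..length lam}. Suc j \<le> pt (h # map Suc lam) (Suc i)} = {i \<in> {1..length lam}. j \<le> pt lam i}"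
    by (auto simp: pt_add_hook)
  then show ?thesis
    unfolding conj_pt_def length_Cons length_map card_filter_atLeastAtMost_Suc by (simp add: pt_add_hook)
qed

lemma frob_rank_add_hook:
  assumes "1 \<le> h"
  shows "frob_rank (h # map Suc lam) = Suc (frob_rank lam)"
proof -
  have "{i \<in> {1..length lam}. Suc i \<le> pt (h # map Suc lam) (Suc i)} = {i \<in> {1..length lam}. i \<le> pt lam i}"
    by (auto simp: pt_add_hook)
  then show ?thesis
    unfolding frob_rank_def length_Cons length_map card_filter_atLeastAtMost_Suc using assms by (simp add: pt_add_hook)
qed

lemma parts_add_hook_iff:
  "h # map Suc lam \<in> parts (Suc p) \<longleftrightarrow> lam \<in> parts p \<and> (\<forall>v\<in>set lam. v < h)"
  unfolding parts_def by (auto simp: sorted_wrt_map)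

lemma psize_add_hook: "psize (h # map Suc lam) = h + psize lam + length lam"
  unfolding psize_def by (induction lam) auto

lemma shifted_parts_add_hook_iff:
  assumes lam: "lam \<in> parts p" and below: "\<forall>v\<in>set lam. v < h" and "1 \<le> h"
  shows "h # map Suc lam \<in> shifted_parts d (Suc p) \<longleftrightarrow> h = p + d \<and> lam \<in> shifted_parts d p"
proof -
  let ?L = "h # map Suc lam"
  have sorted: "sorted_wrt (\<ge>) lam" and len: "length lam = p"
    using lam unfolding parts_def by auto
  have alpha: "frob_alpha ?L (Suc i) = frob_alpha lam i"
    and beta: "frob_beta ?L (Suc i) = frob_beta lam i"
    if "1 \<le> i" and "i \<le> frob_rank lam" for i
  proof -
    have "i \<le> pt lam i" and "i \<le> p"
      using le_pt_if_le_frob_rank[OF sorted that] len by auto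
    moreover have "pt lam i < h"
      using below \<open>i \<le> p\<close> that(1) len unfolding pt_def by auto
    ultimately show "frob_alpha ?L (Suc i) = frob_alpha lam i"
      and "frob_beta ?L (Suc i) = frob_beta lam i"
      using that(1) len unfolding frob_alpha_def frob_beta_def
      by (simp_all add: pt_add_hook conj_pt_add_hook)
  qed
  have alpha1: "frob_alpha ?L 1 = int h - 1"
    using pt_add_hook[of h lam 0] unfolding frob_alpha_def by simp
  have beta1: "frob_beta ?L 1 = int p"
    using conj_pt_add_hook[of h lam 0] \<open>1 \<le> h\<close> len unfolding frob_beta_def by (simp add: conj_pt_zero)
  have "(\<forall>i\<in>{1..frob_rank ?L}. frob_alpha ?L i = frob_beta ?L i + int d - 1)
      \<longleftrightarrow> h = p + d \<and> (\<forall>i\<in>{1..frob_rank lam}. frob_alpha lam i = frob_beta lam i + int d - 1)"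
    unfolding frob_rank_add_hook[OF \<open>1 \<le> h\<close>] ball_atLeastAtMost_Suc
    using alpha beta alpha1 beta1 by auto
  then show ?thesis
    unfolding shifted_parts_def using lam below by (simp add: parts_add_hook_iff)
qed

lemma pt_first_less:
  assumes "lam \<in> shifted_parts d p" and "1 \<le> p"
  shows "pt lam 1 < p + d"
proof -
  have lam: "lam \<in> parts p" and sorted: "sorted_wrt (\<ge>) lam" and len: "length lam = p"
    using assms(1) unfolding shifted_parts_def parts_def by auto
  show ?thesis
  proof (cases "frob_rank lam = 0")
    case True
    then have "1 \<notin> {i \<in> {1..length lam}. i \<le> pt lam i}"
      unfolding frob_rank_interval[OF sorted] by simp
    then show ?thesis using assms(2) len by simp
  next
    case False
    then have "frob_alpha lam 1 = frob_beta lam 1 + int d - 1"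
      using assms(1) unfolding shifted_parts_def by auto
    then show ?thesis
      using conj_pt_le_length[of lam 1] len unfolding frob_alpha_def frob_beta_def by simp
  qed
qed

lemma parts_Suc_cases:
  assumes "L \<in> parts (Suc p)"
  obtains (append_zero) lam where "L = lam @ [0]"
    | (add_hook) h lam where "L = h # map Suc lam" and "1 \<le> h"
proof -
  have sorted: "sorted_wrt (\<ge>) L" and "L \<noteq> []"
    using assms unfolding parts_def by auto
  then have L: "L = butlast L @ [last L]" by simp
  show thesis
  proof (cases "last L = 0")
    case True
    then show ?thesis using append_zero L by metis
  next
    case False
    have positive: "\<forall>v\<in>set L. 1 \<le> v"
    proof
      fix v assume "v \<in> set L"
      then obtain k where k: "k < length L" "L ! k = v" by (auto simp: in_set_conv_nth)
      have "L ! (length L - 1) \<le> L ! k"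
        using sorted_wrt_nth_less[OF sorted, of k "length L - 1"] k by (cases "k = length L - 1") auto
      then show "1 \<le> v" using False \<open>L \<noteq> []\<close> k by (simp add: last_conv_nth)
    qed
    obtain h T where hT: "L = h # T" using \<open>L \<noteq> []\<close> by (cases L) auto
    have "T = map Suc (map (\<lambda>v. v - 1) T)"
      using positive unfolding hT by (induction T) auto
    moreover have "1 \<le> h" using positive hT by simp
    ultimately show ?thesis using add_hook hT by metis
  qed
qed

lemma shifted_parts_0: "shifted_parts d 0 = {[]}"
  unfolding shifted_parts_def parts_def frob_rank_def by auto

lemma add_hook_in_shifted_parts:
  assumes lam: "lam \<in> shifted_parts d p" and "1 \<le> p + d"
  shows "(p + d) # map Suc lam \<in> shifted_parts d (Suc p)"
proof -
  have parts: "lam \<in> parts p" and sorted: "sorted_wrt (\<ge>) lam" and len: "length lam = p"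
    using lam unfolding shifted_parts_def parts_def by auto
  have "v < p + d" if v: "v \<in> set lam" for v
  proof -
    have "1 \<le> p" using v len by (cases lam) auto
    then show ?thesis using le_pt_first[OF sorted v] pt_first_less[OF lam] by simp
  qed
  then show ?thesis using shifted_parts_add_hook_iff[OF parts] lam \<open>1 \<le> p + d\<close> by simp
qed

lemma shifted_parts_Suc:
  "shifted_parts d (Suc p) = (\<lambda>lam. lam @ [0]) ` shifted_parts d p
     \<union> (if 1 \<le> p + d then (\<lambda>lam. (p + d) # map Suc lam) ` shifted_parts d p else {})"
proof (intro equalityI subsetI)
  fix L assume L: "L \<in> shifted_parts d (Suc p)"
  then have "L \<in> parts (Suc p)" unfolding shifted_parts_def by simp
  then show "L \<in> (\<lambda>lam. lam @ [0]) ` shifted_parts d p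
     \<union> (if 1 \<le> p + d then (\<lambda>lam. (p + d) # map Suc lam) ` shifted_parts d p else {})"
  proof (cases rule: parts_Suc_cases)
    case (append_zero lam)
    then show ?thesis using L by (simp add: shifted_parts_append_zero_iff)
  next
    case (add_hook h lam)
    have "h # map Suc lam \<in> parts (Suc p)" using L add_hook unfolding shifted_parts_def by simp
    then have "lam \<in> parts p" and "\<forall>v\<in>set lam. v < h" by (simp_all add: parts_add_hook_iff)
    then show ?thesis
      using L add_hook shifted_parts_add_hook_iff by auto
  qed
next
  fix L assume "L \<in> (\<lambda>lam. lam @ [0]) ` shifted_parts d p
     \<union> (if 1 \<le> p + d then (\<lambda>lam. (p + d) # map Suc lam) ` shifted_parts d p else {})"
  then consider (append_zero) lam where "lam \<in> shifted_parts d p" "L = lam @ [0]"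
    | (add_hook) lam where "lam \<in> shifted_parts d p" "L = (p + d) # map Suc lam" "1 \<le> p + d"
    by (auto split: if_splits)
  then show "L \<in> shifted_parts d (Suc p)"
  proof cases
    case append_zero
    then show ?thesis by (simp add: shifted_parts_append_zero_iff)
  next
    case add_hook
    then show ?thesis by (simp add: add_hook_in_shifted_parts)
  qed
qed

lemma finite_shifted_parts: "finite (shifted_parts d p)"
  by (induction p) (simp_all add: shifted_parts_0 shifted_parts_Suc)

lemma sum_shifted_parts_Suc:
  "(\<Sum>L\<in>shifted_parts d (Suc p). f L) = (\<Sum>lam\<in>shifted_parts d p. f (lam @ [0]))
     + (if 1 \<le> p + d then (\<Sum>lam\<in>shifted_parts d p. f ((p + d) # map Suc lam)) else 0)"
proof -
  have inj_zero: "inj_on (\<lambda>lam. lam @ [0]) (shifted_parts d p)"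
    by (auto intro: inj_onI)
  have inj_hook: "inj_on (\<lambda>lam. (p + d) # map Suc lam) (shifted_parts d p)"
    by (auto intro!: inj_onI simp: inj_map_eq_map)
  have disjoint: "(\<lambda>lam. lam @ [0]) ` shifted_parts d p \<inter> (\<lambda>lam. (p + d) # map Suc lam) ` shifted_parts d p = {}"
    if "1 \<le> p + d"
  proof -
    have "lam @ [0] \<noteq> (p + d) # map Suc lam'" if "length lam' = p" for lam lam'
      using that \<open>1 \<le> p + d\<close> by (cases lam' rule: rev_cases) auto
    then show ?thesis using length_shifted_parts by blast
  qed
  show ?thesis
    unfolding shifted_parts_Suc
    using disjoint finite_shifted_parts
    by (simp add: sum.union_disjoint sum.reindex[OF inj_zero] sum.reindex[OF inj_hook])
qed

definition sign_weight :: "nat \<Rightarrow> nat list \<Rightarrow> nat" where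
  "sign_weight d lam = psize lam + (if d = 1 then frob_rank lam else 0)"

definition hook_sign :: "nat \<Rightarrow> nat list \<Rightarrow> 'a::comm_ring_1" where
  "hook_sign d lam = (-1) ^ (sign_weight d lam div 2)"

lemma sign_weight_append_zero: "sign_weight d (lam @ [0]) = sign_weight d lam"
  unfolding sign_weight_def psize_def by (simp add: frob_rank_append_zero)

lemma sign_weight_add_hook:
  assumes "length lam = p" and "d \<le> 2" and "1 \<le> p + d"
  shows "sign_weight d ((p + d) # map Suc lam) = sign_weight d lam + 2 * (p + (if d = 0 then 0 else 1))"
  using assms unfolding sign_weight_def psize_add_hook frob_rank_add_hook[OF assms(3)] by auto

lemma hook_sign_append_zero: "hook_sign d (lam @ [0]) = hook_sign d lam"
  unfolding hook_sign_def by (simp add: sign_weight_append_zero)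

lemma hook_sign_add_hook:
  assumes "length lam = p" and "d \<le> 2" and "1 \<le> p + d"
  shows "hook_sign d ((p + d) # map Suc lam) = (if d = 0 then 1 else -1) * (-1) ^ p * hook_sign d lam"
  unfolding hook_sign_def sign_weight_add_hook[OF assms] by (simp add: power_add)

lemma even_sign_weight: "lam \<in> shifted_parts d p \<Longrightarrow> d \<le> 2 \<Longrightarrow> even (sign_weight d lam)"
proof (induction p arbitrary: lam)
  case 0
  then show ?case by (simp add: shifted_parts_0 sign_weight_def psize_def frob_rank_def)
next
  case (Suc p)
  then show ?case
    using length_shifted_parts sign_weight_add_hook
    by (auto simp: shifted_parts_Suc sign_weight_append_zero split: if_splits)
qed

section \<open>Expanding folded column blocks\<close>

definition partition_cols :: "(nat \<Rightarrow> 'b) \<Rightarrow> nat \<Rightarrow> nat list \<Rightarrow> 'b list" where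
  "partition_cols e p lam = map (\<lambda>j. e (pt lam (p - j) + j)) [0..<p]"

definition fold_coeff :: "nat \<Rightarrow> nat \<Rightarrow> nat \<Rightarrow> 'a::comm_ring_1" where
  "fold_coeff d p k = (if k < 2 * p - 2 + d - k then (if d = 0 then 1 else -1) else 0)"

definition folded_cols :: "nat \<Rightarrow> (nat \<Rightarrow> nat \<Rightarrow> 'a::comm_ring_1) \<Rightarrow> nat \<Rightarrow> (nat \<Rightarrow> 'a) list" where
  "folded_cols d e p = map (\<lambda>k i. e k i + fold_coeff d p k * e (2 * p - 2 + d - k) i) [0..<p]"

lemma length_partition_cols [simp]: "length (partition_cols e p lam) = p"
  unfolding partition_cols_def by simp

lemma length_folded_cols [simp]: "length (folded_cols d e p) = p"
  unfolding folded_cols_def by simp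

lemma partition_cols_append_zero:
  assumes "length lam = p"
  shows "partition_cols e (Suc p) (lam @ [0]) = e 0 # partition_cols (\<lambda>k. e (Suc k)) p lam"
proof (rule nth_equalityI)
  fix j assume "j < length (partition_cols e (Suc p) (lam @ [0]))"
  then show "partition_cols e (Suc p) (lam @ [0]) ! j = (e 0 # partition_cols (\<lambda>k. e (Suc k)) p lam) ! j"
    using assms unfolding partition_cols_def
    by (cases j) (simp_all add: pt_def nth_append nth_Cons' del: upt_Suc)
qed simp

lemma partition_cols_add_hook:
  assumes "length lam = p"
  shows "partition_cols e (Suc p) (h # map Suc lam) = partition_cols (\<lambda>k. e (Suc k)) p lam @ [e (h + p)]"
proof (rule nth_equalityI)
  fix j assume "j < length (partition_cols e (Suc p) (h # map Suc lam))"
  then have "j < p \<or> j = p" by (simp add: less_Suc_eq)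
  then show "partition_cols e (Suc p) (h # map Suc lam) ! j
      = (partition_cols (\<lambda>k. e (Suc k)) p lam @ [e (h + p)]) ! j"
  proof
    assume "j < p"
    then have "Suc p - j = Suc (p - j)" by simp
    then show ?thesis
      using \<open>j < p\<close> assms unfolding partition_cols_def
      by (simp add: nth_append pt_add_hook del: upt_Suc)
  qed (use assms in \<open>simp add: partition_cols_def nth_append pt_add_hook del: upt_Suc\<close>)
qed simp

lemma folded_cols_Suc:
  "folded_cols d e (Suc p)
    = (\<lambda>i. e 0 i + fold_coeff d (Suc p) 0 * e (2 * p + d) i) # folded_cols d (\<lambda>k. e (Suc k)) p"
proof (rule nth_equalityI)
  fix j assume "j < length (folded_cols d e (Suc p))"
  then have j: "j < Suc p" by simp
  show "folded_cols d e (Suc p) ! j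
      = ((\<lambda>i. e 0 i + fold_coeff d (Suc p) 0 * e (2 * p + d) i) # folded_cols d (\<lambda>k. e (Suc k)) p) ! j"
  proof (cases j)
    case (Suc j')
    then have "2 * Suc p - 2 + d - j = Suc (2 * p - 2 + d - j')"
      and "fold_coeff d (Suc p) j = (fold_coeff d p j' :: 'a)"
      using j unfolding fold_coeff_def by auto
    then show ?thesis using Suc j unfolding folded_cols_def by (simp del: upt_Suc)
  qed (simp add: folded_cols_def del: upt_Suc)
qed simp

lemma det_cols_partition_cols_add_hook:
  assumes "length lam = p" and "length pre + Suc p \<le> n"
  shows "det_cols n (pre @ e (h + p) # partition_cols (\<lambda>k. e (Suc k)) p lam @ post)
    = (-1) ^ p * det_cols n (pre @ partition_cols e (Suc p) (h # map Suc lam) @ post)"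
  using det_cols_move[of pre "partition_cols (\<lambda>k. e (Suc k)) p lam" n "e (h + p)" post] assms
  by (simp add: partition_cols_add_hook)

(* Expand the first column e 0 + c * e (2p + d) by linearity: the e 0 term appends a zero part,
   and the mirror term, moved past the other p columns, adds a hook of arm p + d - 1 and leg p. *)
lemma det_cols_folded_cols:
  fixes e :: "nat \<Rightarrow> nat \<Rightarrow> 'a::comm_ring_1"
  assumes "d \<le> 2" and "length pre + p \<le> n"
  shows "det_cols n (pre @ folded_cols d e p @ post)
    = (\<Sum>lam\<in>shifted_parts d p. hook_sign d lam * det_cols n (pre @ partition_cols e p lam @ post))"
  using assms(2)
proof (induction p arbitrary: e pre)
  case 0
  then show ?case
    by (simp add: shifted_parts_0 folded_cols_def partition_cols_def hook_sign_def sign_weight_def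
        psize_def frob_rank_def)
next
  case (Suc p)
  let ?e = "\<lambda>k. e (Suc k)" and ?c = "fold_coeff d (Suc p) 0 :: 'a" and ?m = "e (2 * p + d)"
  let ?hook = "\<lambda>lam. (p + d) # map Suc lam"
  have IH: "det_cols n (pre @ v # folded_cols d ?e p @ post)
      = (\<Sum>lam\<in>shifted_parts d p. hook_sign d lam * det_cols n (pre @ v # partition_cols ?e p lam @ post))" for v
    using Suc.IH[of "pre @ [v]"] Suc.prems by simp
  have expand: "det_cols n (pre @ folded_cols d e (Suc p) @ post)
      = det_cols n (pre @ e 0 # folded_cols d ?e p @ post) + ?c * det_cols n (pre @ ?m # folded_cols d ?e p @ post)"
    using det_cols_linear[of pre n] Suc.prems by (simp add: folded_cols_Suc)
  have zero_part: "det_cols n (pre @ e 0 # folded_cols d ?e p @ post)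
      = (\<Sum>lam\<in>shifted_parts d p.
           hook_sign d (lam @ [0]) * det_cols n (pre @ partition_cols e (Suc p) (lam @ [0]) @ post))"
    unfolding IH by (intro sum.cong)
      (simp_all add: partition_cols_append_zero length_shifted_parts hook_sign_append_zero)
  have hook_part: "?c * det_cols n (pre @ ?m # folded_cols d ?e p @ post)
      = (\<Sum>lam\<in>shifted_parts d p.
           hook_sign d (?hook lam) * det_cols n (pre @ partition_cols e (Suc p) (?hook lam) @ post))"
    if "1 \<le> p + d"
  proof -
    have "?c = (if d = 0 then 1 else -1)"
      using that unfolding fold_coeff_def by auto
    moreover have "det_cols n (pre @ ?m # partition_cols ?e p lam @ post)
        = (-1) ^ p * det_cols n (pre @ partition_cols e (Suc p) (?hook lam) @ post)"
      if "lam \<in> shifted_parts d p" for lam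
      using det_cols_partition_cols_add_hook[OF length_shifted_parts[OF that] Suc.prems, of e "p + d"]
      by (simp add: mult_2 add_ac)
    ultimately show ?thesis
      unfolding IH sum_distrib_left
      by (intro sum.cong refl) (simp add: hook_sign_add_hook[OF length_shifted_parts assms(1) that])
  qed
  show ?case
  proof (cases "1 \<le> p + d")
    case True
    then show ?thesis unfolding expand zero_part hook_part[OF True] sum_shifted_parts_Suc by simp
  next
    case False
    then have "?c = 0" unfolding fold_coeff_def by simp
    then show ?thesis unfolding expand zero_part sum_shifted_parts_Suc using False by simp
  qed
qed

section \<open>A Chebyshev-type basis\<close>

(* For d = 0 the member with k = 0 is x^N rather than 2 x^N; this causes the correction
   term at k = 1 in cheb_basis_recurrence. *)
definition cheb_coeff :: "nat \<Rightarrow> nat \<Rightarrow> 'a::comm_ring_1" where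
  "cheb_coeff d k = (if d = 0 then (if k = 0 then 0 else 1) else -1)"

definition cheb_basis :: "nat \<Rightarrow> int \<Rightarrow> 'a::field \<Rightarrow> nat \<Rightarrow> 'a" where
  "cheb_basis d N x k = x powi (N - int k) + cheb_coeff d k * x powi (N + int k + int d)"

definition edge_factor :: "nat \<Rightarrow> 'a::comm_ring_1 \<Rightarrow> 'a" where
  "edge_factor d x = (if d = 0 then 1 else 1 - x ^ d)"

lemma cheb_basis_0: "x \<noteq> 0 \<Longrightarrow> cheb_basis d N x 0 = edge_factor d x * x powi N"
  unfolding cheb_basis_def cheb_coeff_def edge_factor_def
  by (simp add: power_int_add algebra_simps)

lemma x_plus_inverse_mult_powi:
  fixes x :: "'a::field"
  assumes "x \<noteq> 0"
  shows "(x + inverse x) * x powi a = x powi (a + 1) + x powi (a - 1)"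
proof -
  have "x * x powi a = x powi (a + 1)"
    using assms by (simp add: power_int_add_1')
  moreover have "inverse x * x powi a = x powi (a - 1)"
    using assms by (simp add: power_int_diff field_simps)
  ultimately show ?thesis by (simp add: distrib_right)
qed

lemma x_plus_inverse_mult_cheb_basis:
  fixes x :: "'a::field"
  assumes "x \<noteq> 0"
  shows "(x + inverse x) * cheb_basis d N x k
    = x powi (N - int k + 1) + x powi (N - int k - 1)
      + cheb_coeff d k * x powi (N + int k + int d + 1) + cheb_coeff d k * x powi (N + int k + int d - 1)"
proof -
  have "(x + inverse x) * (c * y) = c * ((x + inverse x) * y)" for c y :: 'a
    by (simp only: mult.left_commute)
  then show ?thesis
    unfolding cheb_basis_def
    by (simp only: distrib_left x_plus_inverse_mult_powi[OF assms] add.assoc)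
qed

lemma cheb_basis_Suc:
  "cheb_basis d N x (Suc k) = x powi (N - int k - 1) + cheb_coeff d (Suc k) * x powi (N + int k + int d + 1)"
  unfolding cheb_basis_def by (simp add: diff_diff_eq add_ac)

lemma cheb_basis_recurrence:
  fixes x :: "'a::field"
  assumes "x \<noteq> 0" and "d \<le> 2"
  shows "(x + inverse x) * cheb_basis d N x k
    = cheb_basis d N x (Suc k) + (if k = 0 then 0 else cheb_basis d N x (k - 1))
      + (if d = 1 \<and> k = 0 then -1 else if d = 0 \<and> k = 1 then 1 else 0) * cheb_basis d N x 0"
proof -
  let ?c = "cheb_coeff d :: nat \<Rightarrow> 'a"
  note expand = x_plus_inverse_mult_cheb_basis[OF assms(1)] cheb_basis_Suc
  consider (zero) "k = 0" | (one) "k = 1" | (ge2) "2 \<le> k" by linarith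
  then show ?thesis
  proof cases
    case zero
    have "d = 0 \<or> d = 1 \<or> d = 2" using assms(2) by auto
    then show ?thesis
      unfolding expand using zero by (auto simp: cheb_basis_def cheb_coeff_def add_ac)
  next
    case one
    then show ?thesis
      unfolding expand by (auto simp: cheb_basis_def cheb_coeff_def add_ac)
  next
    case ge2
    have "N - int (k - 1) = N - int k + 1" and "N + int (k - 1) + int d = N + int k + int d - 1"
      using ge2 by simp_all
    then have prev: "cheb_basis d N x (k - 1)
        = x powi (N - int k + 1) + ?c (k - 1) * x powi (N + int k + int d - 1)"
      unfolding cheb_basis_def by (simp only:)
    have "?c (Suc k) = ?c k" and "?c (k - 1) = ?c k"
      using ge2 unfolding cheb_coeff_def by auto
    then show ?thesis
      unfolding expand prev using ge2 by (simp add: add_ac)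
  qed
qed

definition cheb_col :: "nat \<Rightarrow> (nat \<Rightarrow> 'a::field) \<Rightarrow> (nat \<Rightarrow> 'a) \<Rightarrow> nat \<Rightarrow> nat \<Rightarrow> nat \<Rightarrow> 'a" where
  "cheb_col d x g m k i = g i * cheb_basis d (int m - 1) (x i) k"

lemma in_span_upto_cheb_col:
  assumes "\<And>i. i < n \<Longrightarrow> x i \<noteq> 0" and "d \<le> 2"
  shows "in_span_upto n (cheb_col d x g m) (Suc k)
    (\<lambda>i. (x i + inverse (x i)) * cheb_col d x g m k i - cheb_col d x g m (Suc k) i)"
proof -
  let ?B = "cheb_col d x g m" and ?z = "if d = 1 \<and> k = 0 then -1 else if d = 0 \<and> k = 1 then 1 else 0"
  have "in_span_upto n ?B (Suc k) (\<lambda>i. if k = 0 then 0 else ?B (k - 1) i)"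
    by (cases k) (simp_all add: in_span_upto_zero in_span_upto_basis)
  then have "in_span_upto n ?B (Suc k) (\<lambda>i. (if k = 0 then 0 else ?B (k - 1) i) + ?z * ?B 0 i)"
    by (intro in_span_upto_add in_span_upto_cmult in_span_upto_basis) simp_all
  then show ?thesis
  proof (rule in_span_upto_cong)
    fix i assume "i < n"
    have "(x i + inverse (x i)) * ?B k i = g i * ((x i + inverse (x i)) * cheb_basis d (int m - 1) (x i) k)"
      unfolding cheb_col_def by (simp only: mult.left_commute)
    then show "(if k = 0 then 0 else ?B (k - 1) i) + ?z * ?B 0 i
        = (x i + inverse (x i)) * ?B k i - ?B (Suc k) i"
      unfolding cheb_basis_recurrence[OF assms(1)[OF \<open>i < n\<close>] assms(2)]
      by (simp add: cheb_col_def algebra_simps)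
  qed
qed

lemma rev_folded_cols_nth:
  fixes x g :: "nat \<Rightarrow> 'a::field"
  assumes "j < m"
  shows "(rev (folded_cols d (\<lambda>k i. g i * x i ^ k) m) ! j) i = cheb_col d x g m j i"
proof -
  have low: "int m - 1 - int j = int (m - 1 - j)" and high: "int m - 1 + int j + int d = int (m - 1 + j + d)"
    using assms by auto
  have pow: "y powi (int m - 1 - int j) = y ^ (m - 1 - j)"
    "y powi (int m - 1 + int j + int d) = y ^ (m - 1 + j + d)" for y :: 'a
    by (simp_all only: low high power_int_of_nat)
  have "rev (folded_cols d (\<lambda>k i. g i * x i ^ k) m) ! j = folded_cols d (\<lambda>k i. g i * x i ^ k) m ! (m - 1 - j)"
    using assms by (simp add: rev_nth)
  moreover have "2 * m - 2 + d - (m - 1 - j) = m - 1 + j + d"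
    and "fold_coeff d m (m - 1 - j) = (cheb_coeff d j :: 'a)"
    using assms unfolding fold_coeff_def cheb_coeff_def by auto
  ultimately show ?thesis
    using assms unfolding folded_cols_def cheb_col_def cheb_basis_def pow
    by (simp add: algebra_simps)
qed

lemma det_cols_cheb_block:
  fixes x g :: "nat \<Rightarrow> 'a::field"
  assumes "\<And>i. i < n \<Longrightarrow> x i \<noteq> 0" and "d \<le> 2" and "length pre + m \<le> n"
  shows "det_cols n (pre @ map (\<lambda>j i. (x i + inverse (x i)) ^ j
        * (g i * (edge_factor d (x i) * x i powi (int m - 1)))) [0..<m] @ post)
    = (-1) ^ (m choose 2) * det_cols n (pre @ folded_cols d (\<lambda>k i. g i * x i ^ k) m @ post)"
proof -
  have "det_cols n (pre @ map (\<lambda>j i. (x i + inverse (x i)) ^ j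
        * (g i * (edge_factor d (x i) * x i powi (int m - 1)))) [0..<m] @ post)
      = det_cols n (pre @ map (cheb_col d x g m) [0..<m] @ post)"
    using in_span_upto_cheb_col[OF assms(1,2)] assms(1,3)
    by (intro det_cols_power_cols) (simp_all add: cheb_col_def cheb_basis_0)
  also have "\<dots> = det_cols n (pre @ rev (folded_cols d (\<lambda>k i. g i * x i ^ k) m) @ post)"
    by (intro det_cols_cong) (simp add: nth_append rev_folded_cols_nth)
  also have "\<dots> = (-1) ^ (m choose 2) * det_cols n (pre @ folded_cols d (\<lambda>k i. g i * x i ^ k) m @ post)"
    using assms(3) by (simp add: det_cols_rev)
  finally show ?thesis .
qed

section \<open>The determinants of U and V\<close>

lemma partition_cols_Nil: "partition_cols e p [] = map e [0..<p]"
  unfolding partition_cols_def pt_def by simp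

lemma det_Vmat_eq_det_cols:
  "det (Vmat p q lam mu x a)
    = det_cols (p + q) (partition_cols (\<lambda>k i. x i ^ k) p lam @ partition_cols (\<lambda>k i. a i * x i ^ k) q mu)"
  unfolding det_cols_def Vmat_def
  by (intro arg_cong[of _ _ det] eq_matI) (auto simp: nth_append partition_cols_def)

lemma powi_times_power_x_plus_inverse:
  fixes x :: "'a::field"
  assumes "x \<noteq> 0" and "j < m"
  shows "(x + inverse x) ^ j * x powi (int m - 1) = x ^ (m - 1 - j) * (1 + x ^ 2) ^ j"
proof -
  have "x powi (int m - 1) = x ^ (m - 1 - j) * x ^ j"
    using assms(2) by (simp add: power_int_def nat_diff_distrib power_add[symmetric])
  moreover have "x * (x + inverse x) = 1 + x ^ 2"
    using assms(1) by (simp add: field_simps power2_eq_square)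
  ultimately show ?thesis by (simp add: power_mult_distrib[symmetric] ac_simps)
qed

lemma det_Umat_eq_det_cols:
  fixes x a :: "nat \<Rightarrow> 'a::field"
  assumes "\<forall>i<p + q. x i \<noteq> 0"
  shows "det (Umat p q x a) = det_cols (p + q)
    (map (\<lambda>j i. (x i + inverse (x i)) ^ j * x i powi (int p - 1)) [0..<p]
     @ map (\<lambda>j i. (x i + inverse (x i)) ^ j * (a i * x i powi (int q - 1))) [0..<q])"
  unfolding det_cols_def Umat_def using assms
  by (intro arg_cong[of _ _ det] eq_matI)
    (auto simp: nth_append powi_times_power_x_plus_inverse mult.left_commute)

lemma det_Umat_eq_det_Vmat:
  fixes x a :: "nat \<Rightarrow> 'a::field"
  assumes "\<forall>i<p + q. x i \<noteq> 0"
  shows "det (Umat p q x a) = (\<Prod>i<p + q. x i powi (int p - 1))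
    * det (Vmat p q [] [] (\<lambda>i. x i + inverse (x i)) (\<lambda>i. a i * x i powi (int q - int p)))"
proof -
  let ?y = "\<lambda>i. x i + inverse (x i)" and ?c = "\<lambda>i. x i powi (int p - 1)"
  have "(\<Prod>i<p + q. ?c i) * det (Vmat p q [] [] ?y (\<lambda>i. a i * x i powi (int q - int p)))
      = det_cols (p + q) (map (\<lambda>v i. ?c i * v i) (map (\<lambda>k i. ?y i ^ k) [0..<p]
          @ map (\<lambda>k i. a i * x i powi (int q - int p) * ?y i ^ k) [0..<q]))"
    unfolding det_Vmat_eq_det_cols partition_cols_Nil by (rule det_cols_scale_rows[symmetric]) simp
  also have "\<dots> = det (Umat p q x a)"
  proof -
    have "?c i * (a i * x i powi (int q - int p)) = a i * x i powi (int q - 1)" if "i < p + q" for i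
      using assms that by (simp add: power_int_add[symmetric] mult.left_commute)
    then show ?thesis
      unfolding det_Umat_eq_det_cols[OF assms] by (intro det_cols_cong) (auto simp: nth_append mult_ac)
  qed
  finally show ?thesis by simp
qed

lemma det_cols_two_folded_blocks:
  fixes x a :: "nat \<Rightarrow> 'a::comm_ring_1"
  assumes "d \<le> 2"
  shows "det_cols (p + q) (folded_cols d (\<lambda>k i. x i ^ k) p @ folded_cols d (\<lambda>k i. a i * x i ^ k) q)
    = (\<Sum>(lam, mu)\<in>shifted_parts d p \<times> shifted_parts d q.
        hook_sign d lam * hook_sign d mu * det (Vmat p q lam mu x a))"
proof -
  let ?n = "p + q" and ?e1 = "\<lambda>k i. x i ^ k" and ?e2 = "\<lambda>k i. a i * x i ^ k"
  have "det_cols ?n (folded_cols d ?e1 p @ folded_cols d ?e2 q)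
      = (\<Sum>lam\<in>shifted_parts d p. hook_sign d lam * det_cols ?n (partition_cols ?e1 p lam @ folded_cols d ?e2 q))"
    using det_cols_folded_cols[OF assms, where pre = "[]" and post = "folded_cols d ?e2 q"] by simp
  also have "\<dots> = (\<Sum>lam\<in>shifted_parts d p. hook_sign d lam *
          (\<Sum>mu\<in>shifted_parts d q. hook_sign d mu * det (Vmat p q lam mu x a)))"
  proof (intro sum.cong refl)
    fix lam
    have "det_cols ?n (partition_cols ?e1 p lam @ folded_cols d ?e2 q @ [])
        = (\<Sum>mu\<in>shifted_parts d q.
            hook_sign d mu * det_cols ?n (partition_cols ?e1 p lam @ partition_cols ?e2 q mu @ []))"
      by (rule det_cols_folded_cols[OF assms]) simp
    then show "hook_sign d lam * det_cols ?n (partition_cols ?e1 p lam @ folded_cols d ?e2 q)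
        = hook_sign d lam * (\<Sum>mu\<in>shifted_parts d q. hook_sign d mu * det (Vmat p q lam mu x a))"
      by (simp add: det_Vmat_eq_det_cols)
  qed
  finally show ?thesis by (simp add: sum.cartesian_product sum_distrib_left mult.assoc)
qed

lemma edge_factor_det_Umat:
  fixes x a :: "nat \<Rightarrow> 'a::field"
  assumes x: "\<forall>i<p + q. x i \<noteq> 0" and "d \<le> 2"
  shows "(\<Prod>i<p + q. edge_factor d (x i)) * det (Umat p q x a)
    = (-1) ^ ((p choose 2) + (q choose 2)) * (\<Sum>(lam, mu)\<in>shifted_parts d p \<times> shifted_parts d q.
        hook_sign d lam * hook_sign d mu * det (Vmat p q lam mu x a))"
proof -
  let ?n = "p + q" and ?y = "\<lambda>i. x i + inverse (x i)"
  let ?e1 = "\<lambda>k i. x i ^ k" and ?e2 = "\<lambda>k i. a i * x i ^ k"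
  have x': "\<And>i. i < ?n \<Longrightarrow> x i \<noteq> 0" using x by simp
  have "(\<Prod>i<?n. edge_factor d (x i)) * det (Umat p q x a)
      = det_cols ?n (map (\<lambda>v i. edge_factor d (x i) * v i)
          (map (\<lambda>j i. ?y i ^ j * x i powi (int p - 1)) [0..<p]
           @ map (\<lambda>j i. ?y i ^ j * (a i * x i powi (int q - 1))) [0..<q]))"
    unfolding det_Umat_eq_det_cols[OF x] by (rule det_cols_scale_rows[symmetric]) simp
  also have "\<dots> = det_cols ?n
          (map (\<lambda>j i. ?y i ^ j * (edge_factor d (x i) * x i powi (int p - 1))) [0..<p]
          @ map (\<lambda>j i. ?y i ^ j * (a i * (edge_factor d (x i) * x i powi (int q - 1)))) [0..<q])"
    by (intro det_cols_cong) (auto simp: nth_append mult_ac)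
  also have "\<dots> = (-1) ^ (p choose 2) * det_cols ?n (folded_cols d ?e1 p
          @ map (\<lambda>j i. ?y i ^ j * (a i * (edge_factor d (x i) * x i powi (int q - 1)))) [0..<q])"
    using det_cols_cheb_block[OF x' assms(2), where pre = "[]" and m = p and g = "\<lambda>_. 1"] by simp
  also have "\<dots> = (-1) ^ (p choose 2) * (-1) ^ (q choose 2) * det_cols ?n (folded_cols d ?e1 p @ folded_cols d ?e2 q)"
    using det_cols_cheb_block[OF x' assms(2), where pre = "folded_cols d ?e1 p" and m = q and g = a
        and post = "[]"] by simp
  also have "det_cols ?n (folded_cols d ?e1 p @ folded_cols d ?e2 q)
      = (\<Sum>(lam, mu)\<in>shifted_parts d p \<times> shifted_parts d q.
          hook_sign d lam * hook_sign d mu * det (Vmat p q lam mu x a))"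
    by (rule det_cols_two_folded_blocks[OF assms(2)])
  finally show ?thesis by (simp add: power_add mult_ac)
qed

lemma sum_hook_signs:
  assumes "d \<le> 2"
    and "\<And>lam mu. lam \<in> shifted_parts d p \<Longrightarrow> mu \<in> shifted_parts d q
      \<Longrightarrow> w lam mu = sign_weight d lam + sign_weight d mu"
  shows "(\<Sum>(lam, mu)\<in>shifted_parts d p \<times> shifted_parts d q. (-1) ^ (w lam mu div 2) * f lam mu)
    = (\<Sum>(lam, mu)\<in>shifted_parts d p \<times> shifted_parts d q.
        hook_sign d lam * hook_sign d mu * (f lam mu :: 'a::comm_ring_1))"
  using assms even_sign_weight[OF _ assms(1)]
  by (intro sum.cong) (auto simp: hook_sign_def div_plus_div_distrib_dvd_left power_add)

lemma Fpq_eq_hook_sum: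
  "Fpq p q x a = (\<Sum>(lam, mu)\<in>shifted_parts 0 p \<times> shifted_parts 0 q.
     hook_sign 0 lam * hook_sign 0 mu * det (Vmat p q lam mu x a))"
  unfolding Fpq_def PP_eq_shifted_parts by (rule sum_hook_signs) (simp_all add: sign_weight_def)

lemma Gpq_eq_hook_sum:
  "Gpq p q x a = (\<Sum>(lam, mu)\<in>shifted_parts 2 p \<times> shifted_parts 2 q.
     hook_sign 2 lam * hook_sign 2 mu * det (Vmat p q lam mu x a))"
  unfolding Gpq_def QQ_eq_shifted_parts by (rule sum_hook_signs) (simp_all add: sign_weight_def)

lemma Hpq_eq_hook_sum:
  "Hpq p q x a = (\<Sum>(lam, mu)\<in>shifted_parts 1 p \<times> shifted_parts 1 q.
     hook_sign 1 lam * hook_sign 1 mu * det (Vmat p q lam mu x a))"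
  unfolding Hpq_def RR_eq_shifted_parts by (rule sum_hook_signs) (simp_all add: sign_weight_def)

theorem mainTheorem7:
  fixes p q :: nat and x a :: "nat \<Rightarrow> 'a::field"
  assumes "\<forall>i < p + q. x i \<noteq> 0"
  shows
   "Gpq p q x a = (-1) ^ ((p choose 2) + (q choose 2))
        * (\<Prod>i<p + q. x i powi (int p - 1) * (1 - x i ^ 2))
        * det (Vmat p q [] [] (\<lambda>i. x i + inverse (x i)) (\<lambda>i. a i * x i powi (int q - int p)))
    \<and> Gpq p q x a = (-1) ^ ((p choose 2) + (q choose 2))
        * (\<Prod>i<p + q. 1 - x i ^ 2) * det (Umat p q x a)
    \<and> Hpq p q x a = (-1) ^ ((p choose 2) + (q choose 2))
        * (\<Prod>i<p + q. x i powi (int p - 1) * (1 - x i))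
        * det (Vmat p q [] [] (\<lambda>i. x i + inverse (x i)) (\<lambda>i. a i * x i powi (int q - int p)))
    \<and> Hpq p q x a = (-1) ^ ((p choose 2) + (q choose 2))
        * (\<Prod>i<p + q. 1 - x i) * det (Umat p q x a)
    \<and> Gpq p q x a = (\<Prod>i<p + q. 1 - x i ^ 2) * Fpq p q x a
    \<and> Hpq p q x a = (\<Prod>i<p + q. 1 - x i) * Fpq p q x a"
proof -
  let ?s = "(-1::'a) ^ ((p choose 2) + (q choose 2))"
  have "?s * ?s = 1" by (simp flip: power_add power_mult_distrib)
  then have hook_sum: "(\<Sum>(lam, mu)\<in>shifted_parts d p \<times> shifted_parts d q.
        hook_sign d lam * hook_sign d mu * det (Vmat p q lam mu x a))
      = ?s * ((\<Prod>i<p + q. edge_factor d (x i)) * det (Umat p q x a))" if "d \<le> 2" for d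
    unfolding edge_factor_det_Umat[OF assms that] by (simp add: mult.assoc[symmetric])
  have F: "Fpq p q x a = ?s * det (Umat p q x a)"
    using hook_sum[of 0] by (simp add: Fpq_eq_hook_sum edge_factor_def)
  have G: "Gpq p q x a = ?s * ((\<Prod>i<p + q. 1 - x i ^ 2) * det (Umat p q x a))"
    using hook_sum[of 2] by (simp add: Gpq_eq_hook_sum edge_factor_def)
  have H: "Hpq p q x a = ?s * ((\<Prod>i<p + q. 1 - x i) * det (Umat p q x a))"
    using hook_sum[of 1] by (simp add: Hpq_eq_hook_sum edge_factor_def)
  show ?thesis
    unfolding F G H det_Umat_eq_det_Vmat[OF assms] by (simp add: prod.distrib mult_ac)
qed

end
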